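(* Let $G$ be a topological group such that $\mathfrak{L}(G)$ carries a structure of real vector space whose scalar multiplication and addition satisfy, for all $t,s\in\mathbb{R}$ and $X_1,X_2\in\mathfrak{L}(G)$, $$(tX_1)(s)=X_1(ts),\qquad (X_1+X_2)(t)=\lim_{n\to\infty}\Big(X_1\big(\tfrac{t}{n}\big)X_2\big(\tfrac{t}{n}\big)\Big)^n,$$ the latter convergence being uniform on every compact subset of $\mathbb{R}$. Assume moreover that $\mathfrak{L}(G)$ is endowed with a topology which is a Baire topology, is stronger than the compact-open topology, and is compatible with this vector space structure; and let $\mathcal{Y}$ be a metrizable Hausdorff locally convex space. Endow $\mathcal{LUC}_{\rm loc}(G,\mathcal{Y})$ with the topology of pointwise convergence. Then for every $\phi\in\mathcal{LUC}^1_{\rm loc}(G,\mathcal{Y})$ the map $\mathfrak{L}(G)\to\mathcal{LUC}_{\rm loc}(G,\mathcal{Y})$, $X\mapsto D^\lambda_X\phi$, is linear and continuous.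
   Context: All topological groups are Hausdorff. $\mathfrak{L}(G)$ is the set of continuous homomorphisms $(\mathbb{R},+)\to G$; its compact-open topology is the topology of uniform convergence on compact subsets of $\mathbb{R}$. For $\phi\colon G\to\mathcal{Y}$, $X\in\mathfrak{L}(G)$, $g\in G$: $(D^\lambda_X\phi)(g)=\lim_{t\to0}\frac{\phi(gX(t))-\phi(g)}{t}$ when it exists. $\mathcal{LUC}_{\rm loc}(G,\mathcal{Y})$ is the set of $\phi\colon G\to\mathcal{Y}$ such that every $g_0\in G$ has a neighborhood $V$ with: for every neighborhood $U$ of $0\in\mathcal{Y}$ there is a neighborhood $W$ of $\mathbf{1}\in G$ such that $x,y\in V$, $x^{-1}y\in W$ imply $\phi(x)-\phi(y)\in U$. $\mathcal{LUC}^1_{\rm loc}(G,\mathcal{Y})$ is the set of $\phi\in\mathcal{LUC}_{\rm loc}(G,\mathcal{Y})$ such that $D^\lambda_X\phi(g)$ exists for all $X,g$ and $D^\lambda_X\phi\in\mathcal{LUC}_{\rm loc}(G,\mathcal{Y})$ for every $X\in\mathfrak{L}(G)$. *)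

theory Defs
  imports "HOL-Analysis.Analysis"
begin

text \<open>Groups are written additively (class group_add, which does NOT assume commutativity):
  the group product g h is g + h, the identity is 0, the inverse of g is - g.\<close>

definition topological_group :: "'g::{group_add, topological_space} itself \<Rightarrow> bool" where
  "topological_group _ \<longleftrightarrow>
     continuous_on UNIV (\<lambda>p::'g \<times> 'g. fst p + snd p) \<and> continuous_on UNIV (uminus :: 'g \<Rightarrow> 'g)"

definition oneps :: "('g::{group_add, topological_space}) itself \<Rightarrow> (real \<Rightarrow> 'g) set" where
  "oneps _ = {X. continuous_on UNIV X \<and> (\<forall>s t. X (s + t) = X s + X t)}"

definition gpow :: "'g::group_add \<Rightarrow> nat \<Rightarrow> 'g" where
  "gpow x n = ((\<lambda>y. x + y) ^^ n) 0"

definition unif_compact_conv :: "(nat \<Rightarrow> real \<Rightarrow> 'g::{group_add, topological_space}) \<Rightarrow> (real \<Rightarrow> 'g) \<Rightarrow> bool" where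
  "unif_compact_conv F Z \<longleftrightarrow>
     (\<forall>K U. compact K \<and> open U \<and> (0::'g) \<in> U \<longrightarrow>
        (\<forall>\<^sub>F n in sequentially. \<forall>t\<in>K. - Z t + F n t \<in> U))"

definition compact_open :: "(real \<Rightarrow> 'g::{group_add, topological_space}) set \<Rightarrow> (real \<Rightarrow> 'g) topology" where
  "compact_open L = topology_generated_by {{X \<in> L. X ` K \<subseteq> U} | K U. compact K \<and> open U}"

definition real_vector_space_on ::
  "'a set \<Rightarrow> ('a \<Rightarrow> 'a \<Rightarrow> 'a) \<Rightarrow> (real \<Rightarrow> 'a \<Rightarrow> 'a) \<Rightarrow> bool" where
  "real_vector_space_on L add sc \<longleftrightarrow>
     (\<forall>x\<in>L. \<forall>y\<in>L. add x y \<in> L) \<and> (\<forall>a. \<forall>x\<in>L. sc a x \<in> L) \<and>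
     (\<forall>x\<in>L. \<forall>y\<in>L. \<forall>z\<in>L. add (add x y) z = add x (add y z)) \<and>
     (\<forall>x\<in>L. \<forall>y\<in>L. add x y = add y x) \<and>
     (\<exists>z\<in>L. (\<forall>x\<in>L. add z x = x) \<and> (\<forall>x\<in>L. \<exists>y\<in>L. add x y = z)) \<and>
     (\<forall>a. \<forall>x\<in>L. \<forall>y\<in>L. sc a (add x y) = add (sc a x) (sc a y)) \<and>
     (\<forall>a b. \<forall>x\<in>L. sc (a + b) x = add (sc a x) (sc b x)) \<and>
     (\<forall>a b. \<forall>x\<in>L. sc a (sc b x) = sc (a * b) x) \<and>
     (\<forall>x\<in>L. sc 1 x = x)"

definition Baire_space :: "'a topology \<Rightarrow> bool" where
  "Baire_space T \<longleftrightarrow>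
     (\<forall>U :: nat \<Rightarrow> 'a set. (\<forall>n. openin T (U n) \<and> T closure_of (U n) = topspace T) \<longrightarrow>
        T closure_of (topspace T \<inter> (\<Inter>n. U n)) = topspace T)"

definition metrizable_lcs :: "'y::{real_vector, t2_space} itself \<Rightarrow> bool" where
  "metrizable_lcs _ \<longleftrightarrow>
     continuous_on UNIV (\<lambda>p::'y \<times> 'y. fst p + snd p) \<and>
     continuous_on UNIV (\<lambda>p::real \<times> 'y. fst p *\<^sub>R snd p) \<and>
     (\<forall>U::'y set. open U \<and> 0 \<in> U \<longrightarrow> (\<exists>V. open V \<and> convex V \<and> 0 \<in> V \<and> V \<subseteq> U)) \<and>
     metrizable_space (euclidean :: 'y topology)"

definition LUC_loc :: "('g::{group_add, topological_space} \<Rightarrow> 'y::{real_vector, topological_space}) set" where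
  "LUC_loc = {\<phi>. \<forall>g0. \<exists>V. open V \<and> g0 \<in> V \<and>
      (\<forall>U. open U \<and> (0::'y) \<in> U \<longrightarrow>
         (\<exists>W. open W \<and> (0::'g) \<in> W \<and>
            (\<forall>x\<in>V. \<forall>y\<in>V. - x + y \<in> W \<longrightarrow> \<phi> x - \<phi> y \<in> U)))}"

definition has_left_deriv ::
  "('g::{group_add, topological_space} \<Rightarrow> 'y::{real_vector, topological_space}) \<Rightarrow> (real \<Rightarrow> 'g) \<Rightarrow> 'g \<Rightarrow> 'y \<Rightarrow> bool" where
  "has_left_deriv \<phi> X g D \<longleftrightarrow> ((\<lambda>t. (1 / t) *\<^sub>R (\<phi> (g + X t) - \<phi> g)) \<longlongrightarrow> D) (at 0)"

definition left_deriv ::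
  "('g::{group_add, topological_space} \<Rightarrow> 'y::{real_vector, t2_space}) \<Rightarrow> (real \<Rightarrow> 'g) \<Rightarrow> 'g \<Rightarrow> 'y" where
  "left_deriv \<phi> X g = Lim (at 0) (\<lambda>t. (1 / t) *\<^sub>R (\<phi> (g + X t) - \<phi> g))"

definition LUC1_loc :: "('g::{group_add, topological_space} \<Rightarrow> 'y::{real_vector, t2_space}) set" where
  "LUC1_loc = {\<phi> \<in> LUC_loc.
      (\<forall>X\<in>oneps TYPE('g). (\<forall>g. \<exists>D. has_left_deriv \<phi> X g D) \<and> left_deriv \<phi> X \<in> LUC_loc)}"

definition LUC_pointwise :: "('g::{group_add, topological_space} \<Rightarrow> 'y::{real_vector, topological_space}) topology" where
  "LUC_pointwise = subtopology (product_topology (\<lambda>_. euclidean) UNIV) LUC_loc"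

end

theory Submission
  imports Defs
begin

text \<open>Along the Trotter product p = X1(t/n) X2(t/n) the increment of \<phi> over p^n telescopes into
  n steps. A mean value inclusion for right derivatives, valued in a convex set, shows that each step
  is t/n times D_X1 \<phi> + D_X2 \<phi> up to an error in a small convex neighbourhood of 0, because the
  derivatives are locally uniformly continuous and the partial products p^k stay near the identity.
  Letting n tend to infinity gives the right derivative along X1 + X2, reflecting t gives the left
  one, and homogeneity is a change of variables.
  For continuity, X \<mapsto> D_X \<phi>(g) is the pointwise limit of the continuous difference quotients at
  t = 1/(m+1); on the Baire space L(G) such a limit has points of small oscillation, and additivity
  transports them by continuous translations of L(G) to every point.\<close>

section \<open>Topological preliminaries\<close>

lemma continuous_on_tendsto_at:
  assumes "\<And>x. (f \<longlongrightarrow> f x) (at x)"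
  shows "continuous_on S f"
  unfolding continuous_on_def by (auto intro: tendsto_mono[OF at_le] assms)

lemma open_vimage_tendsto_at:
  assumes "\<And>x. (f \<longlongrightarrow> f x) (at x)" "open S"
  shows "open (f -` S)"
  by (rule open_vimage[OF assms(2) continuous_on_tendsto_at[OF assms(1)]])

lemma tendsto_continuous_binop:
  assumes "continuous_on UNIV (\<lambda>p. h (fst p) (snd p))" "(f \<longlongrightarrow> a) F" "(g \<longlongrightarrow> b) F"
  shows "((\<lambda>x. h (f x) (g x)) \<longlongrightarrow> h a b) F"
  using continuous_on_tendsto_compose[OF assms(1) tendsto_Pair[OF assms(2,3)]] by simp

lemma continuous_map_continuous_binop:
  assumes "continuous_on UNIV (\<lambda>p. h (fst p) (snd p))"
    and "continuous_map T euclidean f" "continuous_map T euclidean g"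
  shows "continuous_map T euclidean (\<lambda>x. h (f x) (g x))"
  using continuous_map_compose[OF continuous_map_pairedI[OF assms(2,3)], of euclidean "\<lambda>p. h (fst p) (snd p)"]
    assms(1) by (simp add: o_def)

lemma continuous_binop_nhds_pair:
  fixes h :: "'a::topological_space \<Rightarrow> 'a \<Rightarrow> 'b::topological_space"
  assumes "continuous_on UNIV (\<lambda>p. h (fst p) (snd p))" "open S" "h a a \<in> S"
  shows "\<exists>E. open E \<and> a \<in> E \<and> (\<forall>x\<in>E. \<forall>y\<in>E. h x y \<in> S)"
proof -
  have "open ((\<lambda>p. h (fst p) (snd p)) -` S)" by (rule open_vimage[OF assms(2,1)])
  moreover have "(a, a) \<in> (\<lambda>p. h (fst p) (snd p)) -` S" using assms(3) by simp
  ultimately obtain A B where "open A" "open B" "(a, a) \<in> A \<times> B" "A \<times> B \<subseteq> (\<lambda>p. h (fst p) (snd p)) -` S"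
    by (rule open_prod_elim)
  then show ?thesis by (intro exI[of _ "A \<inter> B"]) auto
qed

lemma topological_group_continuous_add:
  "topological_group TYPE('g::{group_add, t2_space}) \<Longrightarrow> continuous_on UNIV (\<lambda>p::'g \<times> 'g. fst p + snd p)"
  by (simp add: topological_group_def)

lemma topological_group_tendsto_add:
  fixes f g :: "'a \<Rightarrow> 'g::{group_add, t2_space}"
  assumes "topological_group TYPE('g)" "(f \<longlongrightarrow> a) F" "(g \<longlongrightarrow> b) F"
  shows "((\<lambda>x. f x + g x) \<longlongrightarrow> a + b) F"
  using tendsto_continuous_binop[where h="(+)", OF topological_group_continuous_add[OF assms(1)] assms(2,3)] .

lemma topological_group_open_translate:
  fixes S :: "'g::{group_add, t2_space} set"
  assumes "topological_group TYPE('g)" "open S"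
  shows "open {w. c + w \<in> S}"
  using open_vimage_tendsto_at[OF topological_group_tendsto_add[OF assms(1) tendsto_const tendsto_ident_at] assms(2)]
  by (simp add: vimage_def)

lemma metrizable_lcs_continuous_add:
  "metrizable_lcs TYPE('y::{real_vector, t2_space}) \<Longrightarrow> continuous_on UNIV (\<lambda>p::'y \<times> 'y. fst p + snd p)"
  by (simp add: metrizable_lcs_def)

lemma metrizable_lcs_tendsto_add:
  fixes f g :: "'a \<Rightarrow> 'y::{real_vector, t2_space}"
  assumes "metrizable_lcs TYPE('y)" "(f \<longlongrightarrow> a) F" "(g \<longlongrightarrow> b) F"
  shows "((\<lambda>x. f x + g x) \<longlongrightarrow> a + b) F"
  using tendsto_continuous_binop[where h="(+)", OF metrizable_lcs_continuous_add[OF assms(1)] assms(2,3)] .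

lemma metrizable_lcs_tendsto_scaleR:
  fixes f :: "'a \<Rightarrow> 'y::{real_vector, t2_space}"
  assumes "metrizable_lcs TYPE('y)" "(c \<longlongrightarrow> a) F" "(f \<longlongrightarrow> b) F"
  shows "((\<lambda>x. c x *\<^sub>R f x) \<longlongrightarrow> a *\<^sub>R b) F"
  using assms(1) tendsto_continuous_binop[of "(*\<^sub>R)", OF _ assms(2,3)] by (simp add: metrizable_lcs_def)

lemma metrizable_lcs_tendsto_diff:
  fixes f g :: "'a \<Rightarrow> 'y::{real_vector, t2_space}"
  assumes "metrizable_lcs TYPE('y)" "(f \<longlongrightarrow> a) F" "(g \<longlongrightarrow> b) F"
  shows "((\<lambda>x. f x - g x) \<longlongrightarrow> a - b) F"
  using metrizable_lcs_tendsto_add[OF assms(1,2) metrizable_lcs_tendsto_scaleR[OF assms(1) tendsto_const assms(3)],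
      of "-1"]
  by simp

lemma metrizable_lcs_continuous_diff:
  "metrizable_lcs TYPE('y::{real_vector, t2_space}) \<Longrightarrow> continuous_on UNIV (\<lambda>p::'y \<times> 'y. fst p - snd p)"
  by (intro continuous_on_tendsto_at metrizable_lcs_tendsto_diff tendsto_fst tendsto_snd tendsto_ident_at)

lemma metrizable_lcs_closed_nhds:
  fixes U :: "'y::{real_vector, t2_space} set"
  assumes "metrizable_lcs TYPE('y)" "open U" "a \<in> U"
  shows "\<exists>V. open V \<and> a \<in> V \<and> closure V \<subseteq> U"
proof -
  have "neighbourhood_base_of (closedin euclidean) (euclidean::'y topology)"
    using assms(1) by (simp add: metrizable_lcs_def metrizable_imp_regular_space neighbourhood_base_of_closedin)
  then obtain V C where "open V" "closed C" "a \<in> V" "V \<subseteq> C" "C \<subseteq> U"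
    using assms unfolding neighbourhood_base_of by (metis open_openin closed_closedin)
  then show ?thesis by (meson closure_minimal order_trans)
qed

lemma continuous_pair_image_closure:
  fixes h :: "'y::topological_space \<times> 'y \<Rightarrow> 'z::topological_space"
  assumes "\<And>p. (h \<longlongrightarrow> h p) (at p)" "\<And>a b. a \<in> A \<Longrightarrow> b \<in> A \<Longrightarrow> h (a, b) \<in> B"
    and "a \<in> closure A" "b \<in> closure A"
  shows "h (a, b) \<in> closure B"
proof -
  have "h ` (A \<times> A) \<subseteq> closure B" using assms(2) closure_subset by fastforce
  then have "h ` closure (A \<times> A) \<subseteq> closure B"
    using image_closure_subset[OF continuous_on_tendsto_at[OF assms(1)] closed_closure] by blast
  then show ?thesis using assms(3,4) by (auto simp: closure_Times)
qed

lemma metrizable_lcs_convex_closure: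
  fixes W :: "'y::{real_vector, t2_space} set"
  assumes Y: "metrizable_lcs TYPE('y)" and "convex W"
  shows "convex (closure W)"
  unfolding convex_def
proof (intro ballI allI impI)
  fix x y and u v :: real
  assume "x \<in> closure W" "y \<in> closure W" "0 \<le> u" "0 \<le> v" "u + v = 1"
  then show "u *\<^sub>R x + v *\<^sub>R y \<in> closure W"
    using continuous_pair_image_closure[of "\<lambda>p. u *\<^sub>R fst p + v *\<^sub>R snd p" W W x y] assms(2)
    by (simp add: convex_def metrizable_lcs_tendsto_add[OF Y] metrizable_lcs_tendsto_scaleR[OF Y]
        tendsto_fst tendsto_snd)
qed

lemma real_interval_continuous_induct:
  fixes s :: real
  assumes "0 \<le> s" "P 0"
    and limit: "\<And>r. 0 < r \<Longrightarrow> r \<le> s \<Longrightarrow> (\<And>r'. 0 \<le> r' \<Longrightarrow> r' < r \<Longrightarrow> P r') \<Longrightarrow> P r"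
    and step: "\<And>r. 0 \<le> r \<Longrightarrow> r < s \<Longrightarrow> P r \<Longrightarrow> \<exists>b>0. \<forall>r'. r < r' \<and> r' < r + b \<longrightarrow> P r'"
  shows "P s"
proof -
  define S where "S = {r \<in> {0..s}. \<forall>r'\<in>{0..r}. P r'}"
  have S0: "0 \<in> S" using assms(1,2) by (auto simp: S_def)
  have Sbdd: "bdd_above S" unfolding S_def by (rule bdd_aboveI[of _ s]) auto
  define r0 where "r0 = Sup S"
  have r0: "0 \<le> r0" "r0 \<le> s"
    unfolding r0_def using S0 Sbdd by (auto intro!: cSup_upper cSup_least simp: S_def)
  have below: "P r" if r: "0 \<le> r" "r < r0" for r
  proof -
    obtain r1 where "r1 \<in> S" "r < r1"
      using less_cSup_iff[of S r] S0 Sbdd r(2) unfolding r0_def by blast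
    then show ?thesis using r(1) by (auto simp: S_def)
  qed
  have at_r0: "P r0"
    using below limit[of r0] r0 assms(2) by (cases "r0 = 0") auto
  show ?thesis
  proof (rule ccontr)
    assume "\<not> P s"
    then have "r0 < s" using at_r0 r0(2) by (metis order_le_less)
    then obtain b where "b > 0" and b: "\<And>r'. r0 < r' \<Longrightarrow> r' < r0 + b \<Longrightarrow> P r'"
      using step[OF r0(1) _ at_r0] by blast
    define r1 where "r1 = min (r0 + b/2) s"
    have "P r'" if "0 \<le> r'" "r' \<le> r1" for r'
      using below[of r'] at_r0 b[of r'] that \<open>b > 0\<close>
      by (cases r' r0 rule: linorder_cases) (auto simp: r1_def)
    then have "r1 \<in> S"
      unfolding S_def using r0 \<open>r0 < s\<close> \<open>b > 0\<close> by (auto simp: r1_def)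
    then have "r1 \<le> r0" unfolding r0_def using Sbdd by (rule cSup_upper)
    then show False using \<open>r0 < s\<close> \<open>b > 0\<close> by (simp add: r1_def)
  qed
qed

lemma mean_value_closure_convex:
  fixes \<psi> :: "real \<Rightarrow> 'y::{real_vector, t2_space}"
  assumes Y: "metrizable_lcs TYPE('y)" and s: "0 < s" and W: "convex W" "open W"
    and cont: "continuous_on {0..s} \<psi>"
    and der: "\<And>r. 0 \<le> r \<Longrightarrow> r < s \<Longrightarrow>
               \<exists>d\<in>W. ((\<lambda>v. (1/v) *\<^sub>R (\<psi> (r+v) - \<psi> r)) \<longlongrightarrow> d) (at_right 0)"
  shows "\<exists>x\<in>closure W. \<psi> s - \<psi> 0 = s *\<^sub>R x"
proof (rule real_interval_continuous_induct[where P="\<lambda>r. \<exists>x\<in>closure W. \<psi> r - \<psi> 0 = r *\<^sub>R x"])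
  show "0 \<le> s" using s by simp
  show "\<exists>x\<in>closure W. \<psi> 0 - \<psi> 0 = 0 *\<^sub>R x"
    using der[of 0] s closure_subset by fastforce
next
  fix r :: real
  assume r: "0 < r" "r \<le> s" and below: "\<And>r'. 0 \<le> r' \<Longrightarrow> r' < r \<Longrightarrow> \<exists>x\<in>closure W. \<psi> r' - \<psi> 0 = r' *\<^sub>R x"
  define F where "F = at r within {0<..<r}"
  have "F \<noteq> bot" unfolding F_def using r by (simp add: trivial_limit_within islimpt_greaterThanLessThan2)
  moreover have "(1/r') *\<^sub>R (\<psi> r' - \<psi> 0) \<in> closure W" if r': "r' \<in> {0<..<r}" for r'
  proof -
    obtain x where "x \<in> closure W" "\<psi> r' - \<psi> 0 = r' *\<^sub>R x" using below[of r'] r' by force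
    then show ?thesis using r' by simp
  qed
  then have "eventually (\<lambda>r'. (1/r') *\<^sub>R (\<psi> r' - \<psi> 0) \<in> closure W) F"
    unfolding F_def eventually_at_filter by simp
  moreover have "(\<psi> \<longlongrightarrow> \<psi> r) (at r within {0..s})"
    using cont r by (simp add: continuous_on_def)
  then have "(\<psi> \<longlongrightarrow> \<psi> r) F"
    unfolding F_def by (rule tendsto_within_subset) (use r in auto)
  then have "((\<lambda>r'. (1/r') *\<^sub>R (\<psi> r' - \<psi> 0)) \<longlongrightarrow> (1/r) *\<^sub>R (\<psi> r - \<psi> 0)) F"
    using r unfolding F_def
    by (intro metrizable_lcs_tendsto_scaleR[OF Y] metrizable_lcs_tendsto_diff[OF Y] tendsto_const tendsto_divide)
      (auto intro: tendsto_ident_at)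
  ultimately have "(1/r) *\<^sub>R (\<psi> r - \<psi> 0) \<in> closure W"
    by (intro Lim_in_closed_set[OF closed_closure])
  then show "\<exists>x\<in>closure W. \<psi> r - \<psi> 0 = r *\<^sub>R x"
    using r by (intro bexI[of _ "(1/r) *\<^sub>R (\<psi> r - \<psi> 0)"]) auto
next
  fix r :: real
  assume r: "0 \<le> r" "r < s" and "\<exists>x\<in>closure W. \<psi> r - \<psi> 0 = r *\<^sub>R x"
  then obtain x where x: "x \<in> closure W" "\<psi> r - \<psi> 0 = r *\<^sub>R x" by blast
  obtain d where "d \<in> W" "((\<lambda>v. (1/v) *\<^sub>R (\<psi> (r+v) - \<psi> r)) \<longlongrightarrow> d) (at_right 0)"
    using der[OF r] by blast
  then have "eventually (\<lambda>v. (1/v) *\<^sub>R (\<psi> (r+v) - \<psi> r) \<in> W) (at_right 0)"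
    using W(2) by (simp add: topological_tendstoD)
  then obtain b where "b > 0" and b: "\<And>v. 0 < v \<Longrightarrow> v < b \<Longrightarrow> (1/v) *\<^sub>R (\<psi> (r+v) - \<psi> r) \<in> W"
    unfolding eventually_at_right_field by auto
  have "\<exists>x\<in>closure W. \<psi> r' - \<psi> 0 = r' *\<^sub>R x" if r': "r < r'" "r' < r + b" for r'
  proof -
    define v where "v = r' - r"
    define w where "w = (1/v) *\<^sub>R (\<psi> r' - \<psi> r)"
    have v: "0 < v" "v < b" "r' = r + v" using r' by (auto simp: v_def)
    have "\<psi> r' - \<psi> 0 = (\<psi> r - \<psi> 0) + (\<psi> r' - \<psi> r)" by simp
    also have "\<dots> = r *\<^sub>R x + v *\<^sub>R w" using x(2) v by (simp add: w_def)
    also have "\<dots> = r' *\<^sub>R ((r/r') *\<^sub>R x + (v/r') *\<^sub>R w)" using r v by (simp add: scaleR_add_right)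
    finally have "\<psi> r' - \<psi> 0 = r' *\<^sub>R ((r/r') *\<^sub>R x + (v/r') *\<^sub>R w)" .
    moreover have "w \<in> closure W" using b[OF v(1,2)] closure_subset unfolding w_def v(3) by blast
    then have "(r/r') *\<^sub>R x + (v/r') *\<^sub>R w \<in> closure W"
      using metrizable_lcs_convex_closure[OF Y W(1)] x(1) r v
      by (intro convexD) (auto simp: add_divide_distrib[symmetric])
    ultimately show ?thesis by blast
  qed
  then show "\<exists>b>0. \<forall>r'. r < r' \<and> r' < r + b \<longrightarrow> (\<exists>x\<in>closure W. \<psi> r' - \<psi> 0 = r' *\<^sub>R x)"
    using \<open>b > 0\<close> by blast
qed

section \<open>One-parameter subgroups and left derivatives\<close>

lemma oneps_add: "X \<in> oneps TYPE('g::{group_add, t2_space}) \<Longrightarrow> X (s + t) = X s + X t"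
  by (simp add: oneps_def)

lemma oneps_zero: "X \<in> oneps TYPE('g::{group_add, t2_space}) \<Longrightarrow> X 0 = 0"
  using oneps_add[of X 0 0] by (metis add_left_imp_eq add.right_neutral add_0)

lemma oneps_tendsto: "X \<in> oneps TYPE('g::{group_add, t2_space}) \<Longrightarrow> (X \<longlongrightarrow> X r) (at r)"
  by (simp add: oneps_def continuous_on_def)

lemma LUC_loc_tendsto:
  fixes \<psi> :: "'g::{group_add, t2_space} \<Rightarrow> 'y::{real_vector, t2_space}"
  assumes G: "topological_group TYPE('g)" and Y: "metrizable_lcs TYPE('y)" and "\<psi> \<in> LUC_loc"
  shows "(\<psi> \<longlongrightarrow> \<psi> g0) (at g0)"
proof (rule topological_tendstoI)
  fix S assume S: "open S" "\<psi> g0 \<in> S"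
  define U where "U = (\<lambda>z. \<psi> g0 - z) -` S"
  have U: "open U" "0 \<in> U" unfolding U_def
    using S by (auto intro!: open_vimage_tendsto_at metrizable_lcs_tendsto_diff[OF Y] tendsto_ident_at)
  obtain V where V: "open V" "g0 \<in> V" and VU: "\<And>U. open U \<Longrightarrow> (0::'y) \<in> U \<Longrightarrow>
        (\<exists>W. open W \<and> (0::'g) \<in> W \<and> (\<forall>x\<in>V. \<forall>y\<in>V. - x + y \<in> W \<longrightarrow> \<psi> x - \<psi> y \<in> U))"
    using assms(3) unfolding LUC_loc_def mem_Collect_eq by metis
  obtain W where W: "open W" "0 \<in> W" "\<forall>x\<in>V. \<forall>y\<in>V. - x + y \<in> W \<longrightarrow> \<psi> x - \<psi> y \<in> U"
    using VU[OF U] by blast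
  define A where "A = V \<inter> {y. - g0 + y \<in> W}"
  have "open A" unfolding A_def using topological_group_open_translate[OF G W(1), of "- g0"] V(1) by auto
  moreover have "g0 \<in> A" unfolding A_def using V W by simp
  moreover have "\<psi> y \<in> S" if "y \<in> A" for y
    using W(3) V(2) that unfolding A_def U_def by auto
  ultimately show "eventually (\<lambda>y. \<psi> y \<in> S) (at g0)"
    unfolding eventually_at_topological by blast
qed

lemma gpow_0 [simp]: "gpow x 0 = 0"
  by (simp add: gpow_def)

lemma gpow_Suc: "gpow x (Suc n) = x + gpow x n"
  by (simp add: gpow_def)

lemma gpow_Suc_right: "gpow x (Suc n) = gpow x n + x"
proof (induction n)
  case (Suc n)
  have "gpow x (Suc (Suc n)) = x + (gpow x n + x)" using Suc by (simp add: gpow_Suc)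
  also have "\<dots> = gpow x (Suc n) + x" by (simp add: gpow_Suc add.assoc)
  finally show ?case .
qed (simp add: gpow_Suc)

lemma gpow_zero [simp]: "gpow 0 n = 0"
  by (induction n) (simp_all add: gpow_Suc)

lemma topological_group_tendsto_gpow:
  fixes f :: "'a \<Rightarrow> 'g::{group_add, t2_space}"
  assumes G: "topological_group TYPE('g)" and "(f \<longlongrightarrow> a) F"
  shows "((\<lambda>x. gpow (f x) n) \<longlongrightarrow> gpow a n) F"
  by (induction n) (simp_all add: gpow_Suc topological_group_tendsto_add[OF G assms(2)])

lemma has_left_deriv_left_deriv:
  fixes \<phi> :: "'g::{group_add, t2_space} \<Rightarrow> 'y::{real_vector, t2_space}"
  assumes "has_left_deriv \<phi> X g D"
  shows "left_deriv \<phi> X g = D"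
  using assms unfolding has_left_deriv_def left_deriv_def by (intro tendsto_Lim) auto

lemma LUC1_loc_has_left_deriv:
  fixes \<phi> :: "'g::{group_add, t2_space} \<Rightarrow> 'y::{real_vector, t2_space}"
  assumes "\<phi> \<in> LUC1_loc" "X \<in> oneps TYPE('g)"
  shows "has_left_deriv \<phi> X g (left_deriv \<phi> X g)"
  using assms has_left_deriv_left_deriv unfolding LUC1_loc_def by blast

lemma LUC1_loc_left_deriv_LUC_loc:
  "\<phi> \<in> LUC1_loc \<Longrightarrow> X \<in> oneps TYPE('g) \<Longrightarrow> left_deriv \<phi> X \<in> LUC_loc"
  for \<phi> :: "'g::{group_add, t2_space} \<Rightarrow> 'y::{real_vector, t2_space}"
  by (simp add: LUC1_loc_def)

lemma increment_along_oneps: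
  fixes \<phi> :: "'g::{group_add, t2_space} \<Rightarrow> 'y::{real_vector, t2_space}"
  assumes G: "topological_group TYPE('g)" and Y: "metrizable_lcs TYPE('y)"
    and \<phi>: "\<And>x. (\<phi> \<longlongrightarrow> \<phi> x) (at x)" and X: "X \<in> oneps TYPE('g)"
    and D: "\<And>x. has_left_deriv \<phi> X x (D x)" and u: "0 < u" and W: "convex W" "open W"
    and near: "\<And>r. 0 \<le> r \<Longrightarrow> r \<le> u \<Longrightarrow> D (h + X r) - c \<in> W"
  shows "\<exists>x\<in>closure W. \<phi> (h + X u) - \<phi> h - u *\<^sub>R c = u *\<^sub>R x"
proof -
  define \<psi> where "\<psi> r = \<phi> (h + X r) - r *\<^sub>R c" for r
  have \<phi>_compose: "((\<lambda>x. \<phi> (f x)) \<longlongrightarrow> \<phi> l) F" if "(f \<longlongrightarrow> l) F" for f l and F :: "real filter"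
    using that by (rule isCont_tendsto_compose[rotated]) (simp add: isCont_def \<phi>)
  have "continuous_on {0..u} \<psi>"
    unfolding \<psi>_def
    by (intro continuous_on_tendsto_at metrizable_lcs_tendsto_diff[OF Y] metrizable_lcs_tendsto_scaleR[OF Y]
        \<phi>_compose topological_group_tendsto_add[OF G] tendsto_const tendsto_ident_at oneps_tendsto[OF X])
  moreover have "\<exists>d\<in>W. ((\<lambda>v. (1/v) *\<^sub>R (\<psi> (r+v) - \<psi> r)) \<longlongrightarrow> d) (at_right 0)"
    if r: "0 \<le> r" "r < u" for r
  proof
    have "((\<lambda>v. (1/v) *\<^sub>R (\<phi> ((h + X r) + X v) - \<phi> (h + X r))) \<longlongrightarrow> D (h + X r)) (at_right 0)"
      using D[of "h + X r"] unfolding has_left_deriv_def by (rule tendsto_mono[OF at_le, rotated]) simp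
    then have L: "((\<lambda>v. (1/v) *\<^sub>R (\<phi> ((h + X r) + X v) - \<phi> (h + X r)) - c) \<longlongrightarrow> D (h + X r) - c)
        (at_right 0)"
      by (intro metrizable_lcs_tendsto_diff[OF Y] tendsto_const)
    have "\<forall>\<^sub>F v in at_right 0.
        (1/v) *\<^sub>R (\<phi> ((h + X r) + X v) - \<phi> (h + X r)) - c = (1/v) *\<^sub>R (\<psi> (r+v) - \<psi> r)"
      using eventually_at_right_less[of "0::real"]
    proof (rule eventually_mono)
      fix v :: real assume "0 < v"
      have "\<psi> (r+v) - \<psi> r = (\<phi> ((h + X r) + X v) - \<phi> (h + X r)) - v *\<^sub>R c"
        unfolding \<psi>_def oneps_add[OF X] by (simp add: add.assoc scaleR_add_left)
      then show "(1/v) *\<^sub>R (\<phi> ((h + X r) + X v) - \<phi> (h + X r)) - c = (1/v) *\<^sub>R (\<psi> (r+v) - \<psi> r)"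
        using \<open>0 < v\<close> by (simp add: scaleR_diff_right)
    qed
    then show "((\<lambda>v. (1/v) *\<^sub>R (\<psi> (r+v) - \<psi> r)) \<longlongrightarrow> D (h + X r) - c) (at_right 0)"
      using L by (simp add: tendsto_cong)
    show "D (h + X r) - c \<in> W" using near r by simp
  qed
  ultimately obtain x where "x \<in> closure W" "\<psi> u - \<psi> 0 = u *\<^sub>R x"
    using mean_value_closure_convex[OF Y u W] by blast
  moreover have "\<psi> u - \<psi> 0 = \<phi> (h + X u) - \<phi> h - u *\<^sub>R c"
    unfolding \<psi>_def using oneps_zero[OF X] by (simp add: algebra_simps)
  ultimately show ?thesis by auto
qed

section \<open>Derivative along a Trotter product\<close>

definition trotter :: "(real \<Rightarrow> 'g::group_add) \<Rightarrow> (real \<Rightarrow> 'g) \<Rightarrow> real \<Rightarrow> nat \<Rightarrow> 'g" where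
  "trotter X1 X2 t n = X1 (t / real n) + X2 (t / real n)"

lemma unif_compact_conv_pointwise:
  fixes Z :: "real \<Rightarrow> 'g::{group_add, t2_space}"
  assumes G: "topological_group TYPE('g)" and "unif_compact_conv F Z"
  shows "(\<lambda>n. F n t) \<longlonglongrightarrow> Z t"
proof -
  have "\<forall>\<^sub>F n in sequentially. - Z t + F n t \<in> V" if "open V" "0 \<in> V" for V
    using assms(2)[unfolded unif_compact_conv_def, rule_format, OF conjI[OF compact_sing conjI[OF that]]]
    by simp
  then have "(\<lambda>n. - Z t + F n t) \<longlonglongrightarrow> 0" by (rule topological_tendstoI)
  then have "(\<lambda>n. Z t + (- Z t + F n t)) \<longlonglongrightarrow> Z t + 0"
    by (intro topological_group_tendsto_add[OF G] tendsto_const)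
  then show ?thesis by (simp add: add.assoc[symmetric])
qed

lemma oneps_tendsto_compose:
  fixes X :: "real \<Rightarrow> 'g::{group_add, t2_space}"
  assumes "X \<in> oneps TYPE('g)" "(f \<longlongrightarrow> a) F"
  shows "((\<lambda>x. X (f x)) \<longlongrightarrow> X a) F"
  using assms(2) by (rule isCont_tendsto_compose[rotated]) (simp add: isCont_def oneps_tendsto[OF assms(1)])

lemma oneps_eventually_nhds_0:
  fixes E :: "'g::{group_add, t2_space} set"
  assumes "X \<in> oneps TYPE('g)" "open E" "0 \<in> E"
  shows "\<forall>\<^sub>F r in nhds 0. X r \<in> E"
proof -
  have "(X \<longlongrightarrow> X 0) (nhds 0)"
    using oneps_tendsto[OF assms(1), of 0] by (simp add: tendsto_at_iff_tendsto_nhds)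
  then have "(X \<longlongrightarrow> 0) (nhds 0)" by (simp add: oneps_zero[OF assms(1)])
  then show ?thesis using assms(2,3) by (rule topological_tendstoD)
qed

lemma topological_group_nhds_sum:
  fixes S :: "'g::{group_add, t2_space} set"
  assumes "topological_group TYPE('g)" "open S" "0 \<in> S"
  shows "\<exists>E. open E \<and> 0 \<in> E \<and> (\<forall>x\<in>E. \<forall>y\<in>E. x + y \<in> S)"
  using continuous_binop_nhds_pair[where h="(+)", OF topological_group_continuous_add[OF assms(1)] assms(2)]
    assms(3) by simp

text \<open>For small t the partial products p^k, k < n, of p = X1(t/n) X2(t/n) stay close to the identity:
  for large k because p^k = trotter X1 X2 (t k/n) k approximates Z(t k/n) uniformly on [0,1],
  for the finitely many small k because p tends to the identity.\<close>

lemma trotter_powers_near_zero: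
  fixes X1 X2 Z :: "real \<Rightarrow> 'g::{group_add, t2_space}"
  assumes G: "topological_group TYPE('g)" and X1: "X1 \<in> oneps TYPE('g)" and X2: "X2 \<in> oneps TYPE('g)"
    and Z: "Z \<in> oneps TYPE('g)" and conv: "unif_compact_conv (\<lambda>n t. gpow (trotter X1 X2 t n) n) Z"
    and E: "open E" "0 \<in> E"
  shows "\<exists>t0>0. \<forall>t. 0 < t \<longrightarrow> t < t0 \<longrightarrow> (\<forall>\<^sub>F n in sequentially. \<forall>k<n. gpow (trotter X1 X2 t n) k \<in> E)"
proof -
  obtain E2 where E2: "open E2" "0 \<in> E2" "\<forall>a\<in>E2. \<forall>b\<in>E2. a + b \<in> E"
    using topological_group_nhds_sum[OF G E] by blast
  have "\<forall>\<^sub>F k in sequentially. \<forall>t'\<in>{0..1}. - Z t' + gpow (trotter X1 X2 t' k) k \<in> E2"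
    using conv E2(1,2) unfolding unif_compact_conv_def by (simp add: compact_Icc)
  then obtain N0 where N0: "\<And>k t'. N0 \<le> k \<Longrightarrow> t' \<in> {0..1} \<Longrightarrow> - Z t' + gpow (trotter X1 X2 t' k) k \<in> E2"
    unfolding eventually_sequentially by blast
  have small_powers: "\<forall>\<^sub>F q in nhds 0. \<forall>k\<in>{..N0}. gpow q k \<in> E"
  proof (rule eventually_ball_finite[OF finite_atMost], rule ballI)
    fix k
    have "((\<lambda>q. gpow q k) \<longlongrightarrow> gpow (0::'g) k) (nhds 0)"
      by (rule topological_group_tendsto_gpow[OF G filterlim_ident])
    then show "\<forall>\<^sub>F q in nhds 0. gpow q k \<in> E" using E by (simp add: topological_tendstoD)
  qed
  obtain d where "d > 0" and d: "\<And>r. \<bar>r\<bar> < d \<Longrightarrow> Z r \<in> E2"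
    using oneps_eventually_nhds_0[OF Z E2(1,2)] unfolding eventually_nhds_metric dist_real_def by force
  show ?thesis
  proof (intro exI[of _ "min 1 d"] conjI allI impI)
    show "0 < min 1 d" using \<open>d > 0\<close> by simp
    fix t :: real assume t: "0 < t" "t < min 1 d"
    have "(\<lambda>n. t / real n) \<longlonglongrightarrow> 0"
      by (intro tendsto_divide_0[OF tendsto_const] filterlim_at_top_imp_at_infinity filterlim_real_sequentially)
    then have "(\<lambda>n. X1 (t / real n) + X2 (t / real n)) \<longlonglongrightarrow> X1 0 + X2 0"
      by (intro topological_group_tendsto_add[OF G] oneps_tendsto_compose[OF X1] oneps_tendsto_compose[OF X2])
    then have "(\<lambda>n. trotter X1 X2 t n) \<longlonglongrightarrow> 0"
      by (simp add: trotter_def oneps_zero[OF X1] oneps_zero[OF X2])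
    then have "\<forall>\<^sub>F n in sequentially. \<forall>k\<in>{..N0}. gpow (trotter X1 X2 t n) k \<in> E"
      using eventually_compose_filterlim[OF small_powers] by blast
    then show "\<forall>\<^sub>F n in sequentially. \<forall>k<n. gpow (trotter X1 X2 t n) k \<in> E"
    proof (rule eventually_mono, intro allI impI)
      fix n k assume few: "\<forall>k\<in>{..N0}. gpow (trotter X1 X2 t n) k \<in> E" and "k < n"
      show "gpow (trotter X1 X2 t n) k \<in> E"
      proof (cases "k \<le> N0")
        case False
        define t' where "t' = t * real k / real n"
        have t': "0 \<le> t'" "t' \<le> t" using t \<open>k < n\<close> by (auto simp: t'_def field_simps)
        have "trotter X1 X2 t' k = trotter X1 X2 t n" using False by (simp add: t'_def trotter_def)
        then have "- Z t' + gpow (trotter X1 X2 t n) k \<in> E2"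
          using N0[of k t'] False t' t by auto
        moreover have "Z t' \<in> E2" using d[of t'] t' t by auto
        ultimately have "Z t' + (- Z t' + gpow (trotter X1 X2 t n) k) \<in> E" using E2(3) by blast
        then show ?thesis by (simp add: add.assoc[symmetric])
      qed (use few in simp)
    qed
  qed
qed

lemma telescope_mean_in_convex:
  fixes f :: "nat \<Rightarrow> 'a::real_vector"
  assumes "convex K" "0 < n" "0 < u" and steps: "\<And>k. k < n \<Longrightarrow> \<exists>z\<in>K. f (Suc k) - f k = u *\<^sub>R (c + z)"
  shows "(1 / (real n * u)) *\<^sub>R (f n - f 0) - c \<in> K"
proof -
  obtain z where z: "\<And>k. k < n \<Longrightarrow> z k \<in> K \<and> f (Suc k) - f k = u *\<^sub>R (c + z k)"
    using steps by metis
  have "f n - f 0 = (\<Sum>k<n. f (Suc k) - f k)"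
    by (simp add: sum_lessThan_telescope)
  also have "\<dots> = (\<Sum>k<n. u *\<^sub>R (c + z k))"
    using z by (intro sum.cong) auto
  also have "\<dots> = u *\<^sub>R (real n *\<^sub>R c + (\<Sum>k<n. z k))"
    by (simp add: scaleR_sum_right[symmetric] sum.distrib sum_constant_scaleR)
  finally have "(1 / (real n * u)) *\<^sub>R (f n - f 0) - c = (\<Sum>k<n. (1 / real n) *\<^sub>R z k)"
    using assms(2,3) by (simp add: scaleR_add_right scaleR_sum_right)
  also have "\<dots> \<in> K"
    by (rule convex_sum[OF finite_lessThan assms(1)]) (use assms(2) z in auto)
  finally show ?thesis .
qed

lemma metrizable_lcs_convex_nhds_sum:
  fixes U :: "'y::{real_vector, t2_space} set"
  assumes Y: "metrizable_lcs TYPE('y)" and "open U" "0 \<in> U"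
  shows "\<exists>W. open W \<and> convex W \<and> 0 \<in> W \<and> closure (\<Union>x\<in>closure W. \<Union>y\<in>closure W. {x + y}) \<subseteq> U"
proof -
  obtain U1 where U1: "open U1" "0 \<in> U1" "closure U1 \<subseteq> U"
    using metrizable_lcs_closed_nhds[OF assms] by blast
  obtain W0 where W0: "open W0" "0 \<in> W0" "\<forall>x\<in>W0. \<forall>y\<in>W0. x + y \<in> U1"
    using continuous_binop_nhds_pair[where h="(+)" and a=0, OF metrizable_lcs_continuous_add[OF Y] U1(1)] U1(2)
    by auto
  obtain W where W: "open W" "convex W" "0 \<in> W" "W \<subseteq> W0"
    using Y W0(1,2) unfolding metrizable_lcs_def by blast
  have add_tendsto: "((\<lambda>p. fst p + snd p) \<longlongrightarrow> fst q + snd q) (at q)" for q :: "'y \<times> 'y"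
    by (intro metrizable_lcs_tendsto_add[OF Y] tendsto_fst tendsto_snd tendsto_ident_at)
  have "x + y \<in> closure U1" if "x \<in> closure W" "y \<in> closure W" for x y
    using continuous_pair_image_closure[of "\<lambda>p. fst p + snd p", OF add_tendsto, of W U1 x y] that W(4) W0(3)
    by auto
  then have "closure (\<Union>x\<in>closure W. \<Union>y\<in>closure W. {x + y}) \<subseteq> closure U1"
    by (intro closure_minimal) auto
  then show ?thesis using W U1(3) by blast
qed

lemma left_deriv_trotter_step:
  fixes \<phi> :: "'g::{group_add, t2_space} \<Rightarrow> 'y::{real_vector, t2_space}"
  assumes G: "topological_group TYPE('g)" and Y: "metrizable_lcs TYPE('y)"
    and \<phi>: "\<And>x. (\<phi> \<longlongrightarrow> \<phi> x) (at x)" and X1: "X1 \<in> oneps TYPE('g)" and X2: "X2 \<in> oneps TYPE('g)"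
    and D1: "\<And>x. has_left_deriv \<phi> X1 x (D1 x)" and D2: "\<And>x. has_left_deriv \<phi> X2 x (D2 x)"
    and u: "0 < u" and W: "convex W" "open W"
    and near1: "\<And>r. 0 \<le> r \<Longrightarrow> r \<le> u \<Longrightarrow> D1 (h + X1 r) - c1 \<in> W"
    and near2: "\<And>r. 0 \<le> r \<Longrightarrow> r \<le> u \<Longrightarrow> D2 (h + X1 u + X2 r) - c2 \<in> W"
  shows "\<exists>z\<in>(\<Union>x\<in>closure W. \<Union>y\<in>closure W. {x + y}). \<phi> (h + (X1 u + X2 u)) - \<phi> h = u *\<^sub>R (c1 + c2 + z)"
proof -
  obtain x1 where x1: "x1 \<in> closure W" "\<phi> (h + X1 u) - \<phi> h - u *\<^sub>R c1 = u *\<^sub>R x1"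
    using increment_along_oneps[OF G Y \<phi> X1 D1 u W near1] by blast
  obtain x2 where x2: "x2 \<in> closure W" "\<phi> (h + X1 u + X2 u) - \<phi> (h + X1 u) - u *\<^sub>R c2 = u *\<^sub>R x2"
    using increment_along_oneps[OF G Y \<phi> X2 D2 u W near2] by blast
  have "\<phi> (h + (X1 u + X2 u)) - \<phi> h
      = (\<phi> (h + X1 u + X2 u) - \<phi> (h + X1 u) - u *\<^sub>R c2) + (\<phi> (h + X1 u) - \<phi> h - u *\<^sub>R c1) + u *\<^sub>R (c1 + c2)"
    by (simp add: add.assoc scaleR_add_right)
  also have "\<dots> = u *\<^sub>R (c1 + c2 + (x1 + x2))"
    unfolding x1(2) x2(2) by (simp add: algebra_simps)
  finally show ?thesis using x1(1) x2(1) by blast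
qed

lemma trotter_difference_quotient_in_convex:
  fixes \<phi> :: "'g::{group_add, t2_space} \<Rightarrow> 'y::{real_vector, t2_space}"
  assumes G: "topological_group TYPE('g)" and Y: "metrizable_lcs TYPE('y)"
    and \<phi>: "\<And>x. (\<phi> \<longlongrightarrow> \<phi> x) (at x)" and X1: "X1 \<in> oneps TYPE('g)" and X2: "X2 \<in> oneps TYPE('g)"
    and D1: "\<And>x. has_left_deriv \<phi> X1 x (D1 x)" and D2: "\<And>x. has_left_deriv \<phi> X2 x (D2 x)"
    and W: "convex W" "open W" and n: "0 < n" and t: "0 < t"
    and near: "\<And>k r. k < n \<Longrightarrow> 0 \<le> r \<Longrightarrow> r \<le> t / real n \<Longrightarrow>
      D1 (g + gpow (trotter X1 X2 t n) k + X1 r) - c1 \<in> W \<and>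
      D2 (g + gpow (trotter X1 X2 t n) k + X1 (t / real n) + X2 r) - c2 \<in> W"
  shows "(1/t) *\<^sub>R (\<phi> (g + gpow (trotter X1 X2 t n) n) - \<phi> g) - (c1 + c2)
           \<in> (\<Union>x\<in>closure W. \<Union>y\<in>closure W. {x + y})"
proof -
  define u where "u = t / real n"
  have u: "0 < u" "real n * u = t" using n t by (auto simp: u_def)
  have K: "convex (\<Union>x\<in>closure W. \<Union>y\<in>closure W. {x + y})"
    using convex_sums metrizable_lcs_convex_closure[OF Y W(1)] by blast
  have steps: "\<exists>z\<in>(\<Union>x\<in>closure W. \<Union>y\<in>closure W. {x + y}).
      \<phi> (g + gpow (trotter X1 X2 t n) (Suc k)) - \<phi> (g + gpow (trotter X1 X2 t n) k) = u *\<^sub>R (c1 + c2 + z)"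
    if "k < n" for k
    using left_deriv_trotter_step[OF G Y \<phi> X1 X2 D1 D2 u(1) W, of "g + gpow (trotter X1 X2 t n) k" c1 c2]
      near[OF that] by (simp add: gpow_Suc_right trotter_def u_def add.assoc)
  show ?thesis
    using telescope_mean_in_convex[where f="\<lambda>k. \<phi> (g + gpow (trotter X1 X2 t n) k)" and c="c1 + c2",
        OF K n u(1) steps] u(2)
    by simp
qed

lemma trotter_segments_near_zero:
  fixes X1 X2 Z :: "real \<Rightarrow> 'g::{group_add, t2_space}"
  assumes G: "topological_group TYPE('g)" and X1: "X1 \<in> oneps TYPE('g)" and X2: "X2 \<in> oneps TYPE('g)"
    and Z: "Z \<in> oneps TYPE('g)" and conv: "unif_compact_conv (\<lambda>n t. gpow (trotter X1 X2 t n) n) Z"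
    and S: "open S" "0 \<in> S"
  shows "\<exists>t0>0. \<forall>t. 0 < t \<longrightarrow> t < t0 \<longrightarrow> (\<forall>\<^sub>F n in sequentially. 0 < n \<and> (\<forall>k<n. \<forall>r. 0 \<le> r \<and> r \<le> t / real n \<longrightarrow>
            gpow (trotter X1 X2 t n) k + X1 r \<in> S \<and> gpow (trotter X1 X2 t n) k + (X1 (t / real n) + X2 r) \<in> S))"
proof -
  obtain E1 where E1: "open E1" "0 \<in> E1" "\<forall>a\<in>E1. \<forall>b\<in>E1. a + b \<in> S"
    using topological_group_nhds_sum[OF G S] by blast
  obtain E2 where E2: "open E2" "0 \<in> E2" "\<forall>a\<in>E2. \<forall>b\<in>E2. a + b \<in> E1"
    using topological_group_nhds_sum[OF G E1(1,2)] by blast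
  obtain t0 where "t0 > 0" and t0: "\<And>t. 0 < t \<Longrightarrow> t < t0 \<Longrightarrow>
      \<forall>\<^sub>F n in sequentially. \<forall>k<n. gpow (trotter X1 X2 t n) k \<in> E1"
    using trotter_powers_near_zero[OF G X1 X2 Z conv E1(1,2)] by blast
  have "\<forall>\<^sub>F r in nhds 0. X1 r \<in> E2 \<and> X2 r \<in> E2"
    by (intro eventually_conj oneps_eventually_nhds_0 X1 X2 E2(1,2))
  then obtain d where "d > 0" and d: "\<And>r. \<bar>r\<bar> < d \<Longrightarrow> X1 r \<in> E2 \<and> X2 r \<in> E2"
    unfolding eventually_nhds_metric dist_real_def by force
  show ?thesis
  proof (intro exI[of _ "min t0 d"] conjI allI impI)
    show "0 < min t0 d" using \<open>t0 > 0\<close> \<open>d > 0\<close> by simp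
    fix t :: real assume t: "0 < t" "t < min t0 d"
    have "\<forall>\<^sub>F n in sequentially. \<forall>k<n. gpow (trotter X1 X2 t n) k \<in> E1" using t0 t by simp
    then show "\<forall>\<^sub>F n in sequentially. 0 < n \<and> (\<forall>k<n. \<forall>r. 0 \<le> r \<and> r \<le> t / real n \<longrightarrow>
        gpow (trotter X1 X2 t n) k + X1 r \<in> S \<and> gpow (trotter X1 X2 t n) k + (X1 (t / real n) + X2 r) \<in> S)"
      using eventually_gt_at_top[of "0::nat"]
    proof (rule eventually_elim2)
      fix n :: nat assume powers: "\<forall>k<n. gpow (trotter X1 X2 t n) k \<in> E1" and "0 < n"
      have "gpow (trotter X1 X2 t n) k + X1 r \<in> S \<and> gpow (trotter X1 X2 t n) k + (X1 (t / real n) + X2 r) \<in> S"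
        if "k < n" "0 \<le> r" "r \<le> t / real n" for k r
      proof -
        have "t / real n \<le> t" using t \<open>0 < n\<close> by (simp add: divide_le_eq)
        then have "X1 r \<in> E2" "X2 r \<in> E2" "X1 (t / real n) \<in> E2" using d t that by auto
        then have "X1 r \<in> E1" "X1 (t / real n) + X2 r \<in> E1" using E2(2,3) by (metis add.right_neutral)+
        then show ?thesis using powers \<open>k < n\<close> E1(3) by blast
      qed
      then show "0 < n \<and> (\<forall>k<n. \<forall>r. 0 \<le> r \<and> r \<le> t / real n \<longrightarrow>
          gpow (trotter X1 X2 t n) k + X1 r \<in> S \<and> gpow (trotter X1 X2 t n) k + (X1 (t / real n) + X2 r) \<in> S)"
        using \<open>0 < n\<close> by blast
    qed
  qed
qed

lemma trotter_difference_quotient_limit: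
  fixes \<phi> :: "'g::{group_add, t2_space} \<Rightarrow> 'y::{real_vector, t2_space}"
  assumes G: "topological_group TYPE('g)" and Y: "metrizable_lcs TYPE('y)" and \<phi>: "\<And>x. (\<phi> \<longlongrightarrow> \<phi> x) (at x)"
    and conv: "unif_compact_conv (\<lambda>n t. gpow (trotter X1 X2 t n) n) Z"
    and ev: "\<forall>\<^sub>F n in sequentially. (1/t) *\<^sub>R (\<phi> (g + gpow (trotter X1 X2 t n) n) - \<phi> g) - c \<in> K"
  shows "(1/t) *\<^sub>R (\<phi> (g + Z t) - \<phi> g) - c \<in> closure K"
proof (rule Lim_in_closed_set[OF closed_closure _ trivial_limit_sequentially])
  show "\<forall>\<^sub>F n in sequentially. (1/t) *\<^sub>R (\<phi> (g + gpow (trotter X1 X2 t n) n) - \<phi> g) - c \<in> closure K"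
    using ev by (rule eventually_mono) (use closure_subset in blast)
  have "(\<lambda>n. g + gpow (trotter X1 X2 t n) n) \<longlonglongrightarrow> g + Z t"
    using unif_compact_conv_pointwise[OF G conv] by (intro topological_group_tendsto_add[OF G] tendsto_const)
  then have "(\<lambda>n. \<phi> (g + gpow (trotter X1 X2 t n) n)) \<longlonglongrightarrow> \<phi> (g + Z t)"
    by (rule isCont_tendsto_compose[rotated]) (simp add: isCont_def \<phi>)
  then show "(\<lambda>n. (1/t) *\<^sub>R (\<phi> (g + gpow (trotter X1 X2 t n) n) - \<phi> g) - c) \<longlonglongrightarrow> (1/t) *\<^sub>R (\<phi> (g + Z t) - \<phi> g) - c"
    by (intro metrizable_lcs_tendsto_diff[OF Y] metrizable_lcs_tendsto_scaleR[OF Y] tendsto_const)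
qed

lemma trotter_right_derivative:
  fixes \<phi> :: "'g::{group_add, t2_space} \<Rightarrow> 'y::{real_vector, t2_space}"
  assumes G: "topological_group TYPE('g)" and Y: "metrizable_lcs TYPE('y)" and \<phi>: "\<phi> \<in> LUC1_loc"
    and X1: "X1 \<in> oneps TYPE('g)" and X2: "X2 \<in> oneps TYPE('g)" and Z: "Z \<in> oneps TYPE('g)"
    and conv: "unif_compact_conv (\<lambda>n t. gpow (trotter X1 X2 t n) n) Z"
  shows "((\<lambda>t. (1/t) *\<^sub>R (\<phi> (g + Z t) - \<phi> g)) \<longlongrightarrow> left_deriv \<phi> X1 g + left_deriv \<phi> X2 g) (at_right 0)"
proof (rule topological_tendstoI)
  define D1 where "D1 = left_deriv \<phi> X1"
  define D2 where "D2 = left_deriv \<phi> X2"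
  have \<phi>_tendsto: "\<And>x. (\<phi> \<longlongrightarrow> \<phi> x) (at x)"
    using \<phi> by (intro LUC_loc_tendsto[OF G Y]) (simp add: LUC1_loc_def)
  have D_tendsto: "(D1 \<longlongrightarrow> D1 x) (at x)" "(D2 \<longlongrightarrow> D2 x) (at x)" for x
    unfolding D1_def D2_def by (intro LUC_loc_tendsto[OF G Y] LUC1_loc_left_deriv_LUC_loc[OF \<phi>] X1 X2)+
  fix S assume S: "open S" "left_deriv \<phi> X1 g + left_deriv \<phi> X2 g \<in> S"
  define c where "c = D1 g + D2 g"
  define U where "U = (\<lambda>y. y + c) -` S"
  have "open U" "0 \<in> U" unfolding U_def using S
    by (auto simp: c_def D1_def D2_def
        intro!: open_vimage_tendsto_at metrizable_lcs_tendsto_add[OF Y] tendsto_ident_at)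
  then obtain W where W: "open W" "convex W" "0 \<in> W"
    and WU: "closure (\<Union>x\<in>closure W. \<Union>y\<in>closure W. {x + y}) \<subseteq> U"
    using metrizable_lcs_convex_nhds_sum[OF Y] by blast
  define N where "N = {x. D1 x - D1 g \<in> W} \<inter> {x. D2 x - D2 g \<in> W}"
  have "open N" unfolding N_def
    using open_vimage_tendsto_at[OF metrizable_lcs_tendsto_diff[OF Y D_tendsto(1) tendsto_const] W(1)]
      open_vimage_tendsto_at[OF metrizable_lcs_tendsto_diff[OF Y D_tendsto(2) tendsto_const] W(1)]
    by (simp add: vimage_def open_Int)
  then have "open {w. g + w \<in> N}" by (rule topological_group_open_translate[OF G])
  moreover have "0 \<in> {w. g + w \<in> N}" using W(3) by (simp add: N_def)
  ultimately obtain t0 where "t0 > 0" and t0: "\<And>t. 0 < t \<Longrightarrow> t < t0 \<Longrightarrow>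
      \<forall>\<^sub>F n in sequentially. 0 < n \<and> (\<forall>k<n. \<forall>r. 0 \<le> r \<and> r \<le> t / real n \<longrightarrow>
        gpow (trotter X1 X2 t n) k + X1 r \<in> {w. g + w \<in> N} \<and>
        gpow (trotter X1 X2 t n) k + (X1 (t / real n) + X2 r) \<in> {w. g + w \<in> N})"
    using trotter_segments_near_zero[OF G X1 X2 Z conv] by blast
  have "(1/t) *\<^sub>R (\<phi> (g + Z t) - \<phi> g) \<in> S" if t: "0 < t" "t < t0" for t
  proof -
    have "\<forall>\<^sub>F n in sequentially. (1/t) *\<^sub>R (\<phi> (g + gpow (trotter X1 X2 t n) n) - \<phi> g) - c
        \<in> (\<Union>x\<in>closure W. \<Union>y\<in>closure W. {x + y})"
      using t0[OF t]
    proof (rule eventually_mono, elim conjE)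
      fix n :: nat assume n: "0 < n" and near: "\<forall>k<n. \<forall>r. 0 \<le> r \<and> r \<le> t / real n \<longrightarrow>
        gpow (trotter X1 X2 t n) k + X1 r \<in> {w. g + w \<in> N} \<and>
        gpow (trotter X1 X2 t n) k + (X1 (t / real n) + X2 r) \<in> {w. g + w \<in> N}"
      show "(1/t) *\<^sub>R (\<phi> (g + gpow (trotter X1 X2 t n) n) - \<phi> g) - c
          \<in> (\<Union>x\<in>closure W. \<Union>y\<in>closure W. {x + y})"
        unfolding c_def
      proof (rule trotter_difference_quotient_in_convex[OF G Y \<phi>_tendsto X1 X2 _ _ W(2,1) n t(1)])
        show "has_left_deriv \<phi> X1 x (D1 x)" "has_left_deriv \<phi> X2 x (D2 x)" for x
          unfolding D1_def D2_def by (intro LUC1_loc_has_left_deriv[OF \<phi>] X1 X2)+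
        fix k r assume "k < n" "0 \<le> r" "r \<le> t / real n"
        then show "D1 (g + gpow (trotter X1 X2 t n) k + X1 r) - D1 g \<in> W \<and>
            D2 (g + gpow (trotter X1 X2 t n) k + X1 (t / real n) + X2 r) - D2 g \<in> W"
          using near by (simp add: N_def add.assoc)
      qed
    qed
    then have "(1/t) *\<^sub>R (\<phi> (g + Z t) - \<phi> g) - c \<in> U"
      using trotter_difference_quotient_limit[OF G Y \<phi>_tendsto conv] WU by blast
    then show ?thesis by (simp add: U_def)
  qed
  then show "\<forall>\<^sub>F t in at_right 0. (1/t) *\<^sub>R (\<phi> (g + Z t) - \<phi> g) \<in> S"
    unfolding eventually_at_right_field using \<open>t0 > 0\<close> by blast
qed

section \<open>Linearity of the derivative\<close>

lemma real_vector_space_on_add_closed: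
  "real_vector_space_on L add sc \<Longrightarrow> x \<in> L \<Longrightarrow> y \<in> L \<Longrightarrow> add x y \<in> L"
  by (simp add: real_vector_space_on_def)

lemma real_vector_space_on_scale_closed:
  "real_vector_space_on L add sc \<Longrightarrow> x \<in> L \<Longrightarrow> sc a x \<in> L"
  by (simp add: real_vector_space_on_def)

lemma real_vector_space_on_add_assoc:
  "real_vector_space_on L add sc \<Longrightarrow> x \<in> L \<Longrightarrow> y \<in> L \<Longrightarrow> z \<in> L \<Longrightarrow> add (add x y) z = add x (add y z)"
  unfolding real_vector_space_on_def by blast

lemma real_vector_space_on_scale_add_left:
  "real_vector_space_on L add sc \<Longrightarrow> x \<in> L \<Longrightarrow> sc (a + b) x = add (sc a x) (sc b x)"
  by (simp add: real_vector_space_on_def)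

lemma real_vector_space_on_scale_add_right:
  "real_vector_space_on L add sc \<Longrightarrow> x \<in> L \<Longrightarrow> y \<in> L \<Longrightarrow> sc a (add x y) = add (sc a x) (sc a y)"
  by (simp add: real_vector_space_on_def)

lemma has_left_deriv_scale:
  fixes \<phi> :: "'g::{group_add, t2_space} \<Rightarrow> 'y::{real_vector, t2_space}"
  assumes Y: "metrizable_lcs TYPE('y)" and X: "X \<in> oneps TYPE('g)" and D: "has_left_deriv \<phi> X g D"
  shows "has_left_deriv \<phi> (\<lambda>s. X (a * s)) g (a *\<^sub>R D)"
proof (cases "a = 0")
  case True
  then show ?thesis unfolding has_left_deriv_def using oneps_zero[OF X] by simp
next
  case False
  define q where "q w = (1/w) *\<^sub>R (\<phi> (g + X w) - \<phi> g)" for w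
  have "filterlim (\<lambda>v. a * v) (at 0) (at (0::real))"
    unfolding filterlim_at using False
    by (auto simp: eventually_at_filter intro: tendsto_eq_intros)
  then have "((\<lambda>v. q (a * v)) \<longlongrightarrow> D) (at 0)"
    using D unfolding has_left_deriv_def q_def by (rule filterlim_compose[rotated])
  then have "((\<lambda>v. a *\<^sub>R q (a * v)) \<longlongrightarrow> a *\<^sub>R D) (at 0)"
    by (intro metrizable_lcs_tendsto_scaleR[OF Y] tendsto_const)
  moreover have "\<forall>\<^sub>F v in at 0. a *\<^sub>R q (a * v) = (1/v) *\<^sub>R (\<phi> (g + X (a * v)) - \<phi> g)"
    unfolding eventually_at_filter using False by (simp add: q_def)
  ultimately show ?thesis unfolding has_left_deriv_def using tendsto_cong by force
qed

lemma left_deriv_scale: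
  fixes \<phi> :: "'g::{group_add, t2_space} \<Rightarrow> 'y::{real_vector, t2_space}"
  assumes "metrizable_lcs TYPE('y)" "\<phi> \<in> LUC1_loc" "X \<in> oneps TYPE('g)"
  shows "left_deriv \<phi> (\<lambda>s. X (a * s)) g = a *\<^sub>R left_deriv \<phi> X g"
  by (intro has_left_deriv_left_deriv has_left_deriv_scale LUC1_loc_has_left_deriv assms)

text \<open>The Trotter product only yields the right derivative; the left one is the right derivative
  along the reversed subgroups X1(-s), X2(-s), whose sum is Z(-s).\<close>

lemma left_deriv_add:
  fixes add :: "(real \<Rightarrow> 'g::{group_add, t2_space}) \<Rightarrow> (real \<Rightarrow> 'g) \<Rightarrow> (real \<Rightarrow> 'g)"
    and \<phi> :: "'g \<Rightarrow> 'y::{real_vector, t2_space}"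
  assumes G: "topological_group TYPE('g)" and Y: "metrizable_lcs TYPE('y)" and \<phi>: "\<phi> \<in> LUC1_loc"
    and vs: "real_vector_space_on (oneps TYPE('g)) add (\<lambda>t X. \<lambda>s. X (t * s))"
    and conv: "\<And>X1 X2. X1 \<in> oneps TYPE('g) \<Longrightarrow> X2 \<in> oneps TYPE('g) \<Longrightarrow>
      unif_compact_conv (\<lambda>n t. gpow (trotter X1 X2 t n) n) (add X1 X2)"
    and X1: "X1 \<in> oneps TYPE('g)" and X2: "X2 \<in> oneps TYPE('g)"
  shows "left_deriv \<phi> (add X1 X2) g = left_deriv \<phi> X1 g + left_deriv \<phi> X2 g"
proof -
  define Z where "Z = add X1 X2"
  define D where "D = left_deriv \<phi> X1 g + left_deriv \<phi> X2 g"
  define q where "q t = (1/t) *\<^sub>R (\<phi> (g + Z t) - \<phi> g)" for t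
  define X1' where "X1' = (\<lambda>s. X1 ((-1) * s))"
  define X2' where "X2' = (\<lambda>s. X2 ((-1) * s))"
  have Z: "Z \<in> oneps TYPE('g)" unfolding Z_def by (rule real_vector_space_on_add_closed[OF vs X1 X2])
  have X': "X1' \<in> oneps TYPE('g)" "X2' \<in> oneps TYPE('g)"
    unfolding X1'_def X2'_def by (intro real_vector_space_on_scale_closed[OF vs] X1 X2)+
  have "(q \<longlongrightarrow> D) (at_right 0)"
    unfolding q_def D_def Z_def by (rule trotter_right_derivative[OF G Y \<phi> X1 X2 Z[unfolded Z_def] conv[OF X1 X2]])
  moreover have "((\<lambda>t. q (- t)) \<longlongrightarrow> D) (at_right 0)"
  proof -
    have "add X1' X2' = (\<lambda>s. Z ((-1) * s))"
      unfolding X1'_def X2'_def Z_def by (rule real_vector_space_on_scale_add_right[OF vs X1 X2, symmetric])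
    then have "((\<lambda>t. (1/t) *\<^sub>R (\<phi> (g + Z (- t)) - \<phi> g)) \<longlongrightarrow> left_deriv \<phi> X1' g + left_deriv \<phi> X2' g)
        (at_right 0)"
      using trotter_right_derivative[OF G Y \<phi> X' real_vector_space_on_add_closed[OF vs X'] conv[OF X']] by simp
    moreover have "left_deriv \<phi> X1' g + left_deriv \<phi> X2' g = (-1) *\<^sub>R D"
      unfolding X1'_def X2'_def D_def
      using left_deriv_scale[OF Y \<phi> X1, of "-1" g] left_deriv_scale[OF Y \<phi> X2, of "-1" g]
      by (simp add: scaleR_add_right)
    ultimately have "((\<lambda>t. (1/t) *\<^sub>R (\<phi> (g + Z (- t)) - \<phi> g)) \<longlongrightarrow> (-1) *\<^sub>R D) (at_right 0)"
      by simp
    then have "((\<lambda>t. (-1) *\<^sub>R ((1/t) *\<^sub>R (\<phi> (g + Z (- t)) - \<phi> g))) \<longlongrightarrow> (-1) *\<^sub>R ((-1) *\<^sub>R D)) (at_right 0)"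
      by (rule metrizable_lcs_tendsto_scaleR[OF Y tendsto_const])
    then show ?thesis by (simp add: q_def)
  qed
  then have "(q \<longlongrightarrow> D) (at_left 0)" by (simp add: filterlim_at_left_to_right[of q _ 0])
  ultimately have "(q \<longlongrightarrow> D) (at 0)" by (rule filterlim_split_at[rotated])
  then show ?thesis
    unfolding Z_def D_def q_def by (intro has_left_deriv_left_deriv) (simp add: has_left_deriv_def)
qed

section \<open>Continuity of homogeneous pointwise limits on Baire spaces\<close>

lemma metrizable_lcs_nhds_closure_diff_add:
  fixes U :: "'y::{real_vector, t2_space} set"
  assumes Y: "metrizable_lcs TYPE('y)" and "open U" "0 \<in> U"
  shows "\<exists>V. open V \<and> 0 \<in> V \<and> (\<forall>a\<in>closure V. \<forall>b\<in>closure V. \<forall>c\<in>V. a - b + c \<in> U)"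
proof -
  obtain U1 where U1: "open U1" "0 \<in> U1" "closure U1 \<subseteq> U"
    using metrizable_lcs_closed_nhds[OF assms] by blast
  obtain E where E: "open E" "0 \<in> E" "\<forall>x\<in>E. \<forall>y\<in>E. x + y \<in> U1"
    using continuous_binop_nhds_pair[where h="(+)" and a=0, OF metrizable_lcs_continuous_add[OF Y] U1(1)] U1(2)
    by auto
  obtain E' where E': "open E'" "0 \<in> E'" "\<forall>x\<in>E'. \<forall>y\<in>E'. x - y \<in> E"
    using continuous_binop_nhds_pair[where h="(-)" and a=0, OF metrizable_lcs_continuous_diff[OF Y] E(1)] E(2)
    by auto
  have "a - b + c \<in> U" if "a \<in> closure (E \<inter> E')" "b \<in> closure (E \<inter> E')" "c \<in> E \<inter> E'" for a b c
  proof -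
    have "((\<lambda>p. fst p - snd p + c) \<longlongrightarrow> fst q - snd q + c) (at q)" for q :: "'y \<times> 'y"
      by (intro metrizable_lcs_tendsto_add[OF Y] metrizable_lcs_tendsto_diff[OF Y] tendsto_fst tendsto_snd
          tendsto_ident_at tendsto_const)
    then have "a - b + c \<in> closure U1"
      using continuous_pair_image_closure[of "\<lambda>p. fst p - snd p + c" "E \<inter> E'" U1 a b] that E(3) E'(3) by auto
    then show ?thesis using U1(3) by blast
  qed
  then show ?thesis using E E' by (intro exI[of _ "E \<inter> E'"]) auto
qed

lemma Baire_space_closed_cover:
  fixes C :: "nat \<Rightarrow> 'a set"
  assumes "Baire_space T" "topspace T \<noteq> {}"
    and closed: "\<And>N. closedin T (C N)" and cover: "topspace T \<subseteq> (\<Union>N. C N)"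
  shows "\<exists>N. T interior_of C N \<noteq> {}"
proof (rule ccontr)
  assume "\<nexists>N. T interior_of C N \<noteq> {}"
  then have "openin T (topspace T - C N) \<and> T closure_of (topspace T - C N) = topspace T" for N
    using openin_diff[OF openin_topspace closed] closure_of_complement[of T "C N"] by simp
  then have "T closure_of (topspace T \<inter> (\<Inter>N. topspace T - C N)) = topspace T"
    using assms(1)[unfolded Baire_space_def, rule_format, of "\<lambda>N. topspace T - C N"] by simp
  then have "topspace T \<inter> (\<Inter>N. topspace T - C N) \<noteq> {}"
    using assms(2) by (metis closure_of_empty)
  then show False using cover by blast
qed

lemma continuous_map_metrizable_lcs_diff:
  fixes f g :: "'a \<Rightarrow> 'y::{real_vector, t2_space}"
  assumes "metrizable_lcs TYPE('y)" "continuous_map T euclidean f" "continuous_map T euclidean g"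
  shows "continuous_map T euclidean (\<lambda>x. f x - g x)"
  using continuous_map_continuous_binop[where h="(-)", OF metrizable_lcs_continuous_diff[OF assms(1)] assms(2,3)] .

text \<open>The Baire category argument: the closed sets on which the sequence oscillates by at most
  closure V from index N on cover the space, so one of them has an interior point.\<close>

lemma pointwise_limit_small_oscillation:
  fixes f :: "'a \<Rightarrow> 'y::{real_vector, t2_space}" and fs :: "nat \<Rightarrow> 'a \<Rightarrow> 'y"
  assumes Y: "metrizable_lcs TYPE('y)" and T: "Baire_space T" "topspace T \<noteq> {}"
    and fs: "\<And>m. continuous_map T euclidean (fs m)"
    and lim: "\<And>X. X \<in> topspace T \<Longrightarrow> (\<lambda>m. fs m X) \<longlonglongrightarrow> f X"
    and U: "open U" "0 \<in> U"
  shows "\<exists>X0 A. openin T A \<and> X0 \<in> A \<and> (\<forall>X\<in>A. f X - f X0 \<in> U)"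
proof -
  obtain V where V: "open V" "0 \<in> V" and VU: "\<forall>a\<in>closure V. \<forall>b\<in>closure V. \<forall>c\<in>V. a - b + c \<in> U"
    using metrizable_lcs_nhds_closure_diff_add[OF Y U] by blast
  obtain V2 where V2: "open V2" "0 \<in> V2" "\<forall>x\<in>V2. \<forall>y\<in>V2. x - y \<in> V"
    using continuous_binop_nhds_pair[where h="(-)" and a=0, OF metrizable_lcs_continuous_diff[OF Y] V(1)] V(2)
    by auto
  define C where "C N = {X \<in> topspace T. \<forall>m\<ge>N. fs m X - fs N X \<in> closure V}" for N
  have "closedin T (C N)" for N
  proof -
    have "closedin T {X \<in> topspace T. fs m X - fs N X \<in> closure V}" for m
      by (rule closedin_continuous_map_preimage[OF continuous_map_metrizable_lcs_diff[OF Y fs fs]]) simp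
    then have "closedin T (topspace T \<inter> (\<Inter>m\<in>{N..}. {X \<in> topspace T. fs m X - fs N X \<in> closure V}))"
      by (intro closedin_Int closedin_Inter) auto
    moreover have "C N = topspace T \<inter> (\<Inter>m\<in>{N..}. {X \<in> topspace T. fs m X - fs N X \<in> closure V})"
      by (auto simp: C_def)
    ultimately show ?thesis by simp
  qed
  moreover have "topspace T \<subseteq> (\<Union>N. C N)"
  proof
    fix X assume X: "X \<in> topspace T"
    have "(\<lambda>m. fs m X - f X) \<longlonglongrightarrow> 0"
      using metrizable_lcs_tendsto_diff[OF Y lim[OF X] tendsto_const, of "f X"] by simp
    then have "\<forall>\<^sub>F m in sequentially. fs m X - f X \<in> V2"
      using V2(1,2) by (rule topological_tendstoD)
    then obtain N where N: "\<And>m. m \<ge> N \<Longrightarrow> fs m X - f X \<in> V2"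
      unfolding eventually_sequentially by blast
    have "fs m X - fs N X \<in> closure V" if "m \<ge> N" for m
    proof -
      have "(fs m X - f X) - (fs N X - f X) \<in> V" using V2(3) N[OF that] N[of N] by blast
      then show ?thesis using closure_subset by auto
    qed
    then show "X \<in> (\<Union>N. C N)" using X by (auto simp: C_def)
  qed
  ultimately obtain N where "T interior_of C N \<noteq> {}"
    using Baire_space_closed_cover[OF T] by blast
  then obtain X0 where X0: "X0 \<in> T interior_of C N" by blast
  have near_limit: "f X - fs N X \<in> closure V" if "X \<in> T interior_of C N" for X
  proof -
    have X: "X \<in> topspace T" "\<forall>m\<ge>N. fs m X - fs N X \<in> closure V"
      using that interior_of_subset[of T "C N"] by (auto simp: C_def)
    have "\<forall>\<^sub>F m in sequentially. fs m X - fs N X \<in> closure V"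
      using X(2) unfolding eventually_sequentially by blast
    moreover have "(\<lambda>m. fs m X - fs N X) \<longlonglongrightarrow> f X - fs N X"
      by (intro metrizable_lcs_tendsto_diff[OF Y] lim[OF X(1)] tendsto_const)
    ultimately show ?thesis
      by (rule Lim_in_closed_set[OF closed_closure _ trivial_limit_sequentially])
  qed
  define A where "A = T interior_of C N \<inter> {X \<in> topspace T. fs N X - fs N X0 \<in> V}"
  have "continuous_map T euclidean (\<lambda>X. fs N X0)" by (simp add: continuous_map_const)
  then have "continuous_map T euclidean (\<lambda>X. fs N X - fs N X0)"
    by (rule continuous_map_metrizable_lcs_diff[OF Y fs])
  then have "openin T {X \<in> topspace T. fs N X - fs N X0 \<in> V}"
    using V(1) by (simp add: openin_continuous_map_preimage)
  then have "openin T A" unfolding A_def by (intro openin_Int openin_interior_of)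
  moreover have "X0 \<in> A"
    using X0 interior_of_subset_topspace[of T "C N"] V(2) unfolding A_def by auto
  moreover have "f X - f X0 \<in> U" if X: "X \<in> A" for X
  proof -
    have "(f X - fs N X) - (f X0 - fs N X0) + (fs N X - fs N X0) \<in> U"
      using VU near_limit[of X] near_limit[OF X0] X unfolding A_def by blast
    moreover have "(f X - fs N X) - (f X0 - fs N X0) + (fs N X - fs N X0) = f X - f X0"
      by (simp add: algebra_simps)
    ultimately show ?thesis by simp
  qed
  ultimately show ?thesis by blast
qed

lemma continuous_map_homogeneous_pointwise_limit:
  fixes f :: "'a \<Rightarrow> 'y::{real_vector, t2_space}" and fs :: "nat \<Rightarrow> 'a \<Rightarrow> 'y"
  assumes Y: "metrizable_lcs TYPE('y)" and T: "Baire_space T" "topspace T \<noteq> {}"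
    and fs: "\<And>m. continuous_map T euclidean (fs m)"
    and lim: "\<And>X. X \<in> topspace T \<Longrightarrow> (\<lambda>m. fs m X) \<longlonglongrightarrow> f X"
    and shift: "\<And>Z X0. Z \<in> topspace T \<Longrightarrow> X0 \<in> topspace T \<Longrightarrow> \<exists>\<tau>. continuous_map T T \<tau> \<and> \<tau> Z = X0 \<and>
                   (\<forall>X\<in>topspace T. f (\<tau> X) = f X - f Z + f X0)"
  shows "continuous_map T euclidean f"
  unfolding continuous_map_def
proof (intro conjI allI impI)
  show "f \<in> topspace T \<rightarrow> topspace euclidean" by simp
  fix S :: "'y set" assume "openin euclidean S"
  then have S: "open S" by simp
  show "openin T {X \<in> topspace T. f X \<in> S}"
  proof (subst openin_subopen, intro ballI)
    fix Z assume Z: "Z \<in> {X \<in> topspace T. f X \<in> S}"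
    define U where "U = (\<lambda>y. y + f Z) -` S"
    have "open U" "0 \<in> U" unfolding U_def using S Z
      by (auto intro!: open_vimage_tendsto_at metrizable_lcs_tendsto_add[OF Y])
    then obtain X0 B where B: "openin T B" "X0 \<in> B" "\<forall>X\<in>B. f X - f X0 \<in> U"
      using pointwise_limit_small_oscillation[OF Y T fs lim] by blast
    obtain \<tau> where \<tau>: "continuous_map T T \<tau>" "\<tau> Z = X0" "\<forall>X\<in>topspace T. f (\<tau> X) = f X - f Z + f X0"
      using shift[of Z X0] Z B(1,2) openin_subset by blast
    define A where "A = {X \<in> topspace T. \<tau> X \<in> B}"
    have "openin T A" unfolding A_def by (rule openin_continuous_map_preimage[OF \<tau>(1) B(1)])
    moreover have "Z \<in> A" using Z \<tau>(2) B(2) by (simp add: A_def)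
    moreover have "f X \<in> S" if "X \<in> A" for X
    proof -
      have "f (\<tau> X) - f X0 \<in> U" "f (\<tau> X) - f X0 = f X - f Z"
        using B(3) \<tau>(3) that by (auto simp: A_def)
      then show ?thesis by (simp add: U_def)
    qed
    ultimately show "\<exists>A. openin T A \<and> Z \<in> A \<and> A \<subseteq> {X \<in> topspace T. f X \<in> S}"
      unfolding A_def by blast
  qed
qed

section \<open>Continuity of the derivative\<close>

lemma continuous_map_eval:
  assumes T_space: "topspace T = oneps TYPE('g::{group_add, t2_space})"
    and T_finer: "\<forall>S. openin (compact_open (oneps TYPE('g))) S \<longrightarrow> openin T S"
  shows "continuous_map T euclidean (\<lambda>X. X a)"
  unfolding continuous_map_def
proof (intro conjI allI impI)
  show "(\<lambda>X. X a) \<in> topspace T \<rightarrow> topspace euclidean" by simp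
  fix S :: "'g set" assume "openin euclidean S"
  then have "openin (compact_open (oneps TYPE('g))) {X \<in> oneps TYPE('g). X ` {a} \<subseteq> S}"
    unfolding compact_open_def
    by (intro topology_generated_by_Basis CollectI exI[of _ "{a}"] exI[of _ S]) auto
  then show "openin T {X \<in> topspace T. X a \<in> S}" using T_finer T_space by simp
qed

lemma continuous_map_difference_quotient:
  fixes \<phi> :: "'g::{group_add, t2_space} \<Rightarrow> 'y::{real_vector, t2_space}"
  assumes G: "topological_group TYPE('g)" and Y: "metrizable_lcs TYPE('y)" and \<phi>: "\<phi> \<in> LUC_loc"
    and eval: "continuous_map T euclidean (\<lambda>X. X a)"
  shows "continuous_map T euclidean (\<lambda>X. c *\<^sub>R (\<phi> (g + X a) - \<phi> g))"
proof -
  have "continuous_map euclidean euclidean (\<lambda>w. c *\<^sub>R (\<phi> (g + w) - \<phi> g))"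
    unfolding continuous_map_iff_continuous2
    by (intro continuous_on_tendsto_at metrizable_lcs_tendsto_scaleR[OF Y] metrizable_lcs_tendsto_diff[OF Y]
        tendsto_const isCont_tendsto_compose[OF _ topological_group_tendsto_add[OF G tendsto_const tendsto_ident_at]])
      (simp add: isCont_def LUC_loc_tendsto[OF G Y \<phi>])
  from continuous_map_compose[OF eval this] show ?thesis by (simp add: o_def)
qed

lemma LUC1_loc_difference_quotient_tendsto:
  fixes \<phi> :: "'g::{group_add, t2_space} \<Rightarrow> 'y::{real_vector, t2_space}"
  assumes "\<phi> \<in> LUC1_loc" "X \<in> oneps TYPE('g)"
  shows "(\<lambda>m. real (Suc m) *\<^sub>R (\<phi> (g + X (1 / real (Suc m))) - \<phi> g)) \<longlonglongrightarrow> left_deriv \<phi> X g"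
proof -
  have "filterlim (\<lambda>m. 1 / real (Suc m)) (at 0) sequentially"
    unfolding filterlim_at using LIMSEQ_inverse_real_of_nat by (simp add: inverse_eq_divide)
  with LUC1_loc_has_left_deriv[OF assms, of g]
  have "(\<lambda>m. (1 / (1 / real (Suc m))) *\<^sub>R (\<phi> (g + X (1 / real (Suc m))) - \<phi> g)) \<longlonglongrightarrow> left_deriv \<phi> X g"
    unfolding has_left_deriv_def by (rule filterlim_compose)
  then show ?thesis by simp
qed

lemma oneps_add_neg_cancel_left:
  fixes add :: "(real \<Rightarrow> 'g::{group_add, t2_space}) \<Rightarrow> (real \<Rightarrow> 'g) \<Rightarrow> (real \<Rightarrow> 'g)"
  assumes vs: "real_vector_space_on (oneps TYPE('g)) add (\<lambda>t X. \<lambda>s. X (t * s))"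
    and Z: "Z \<in> oneps TYPE('g)" and X: "X \<in> oneps TYPE('g)"
  shows "add Z (add (\<lambda>s. Z ((-1) * s)) X) = X"
proof -
  have Z': "(\<lambda>s. Z ((-1) * s)) \<in> oneps TYPE('g)" by (rule real_vector_space_on_scale_closed[OF vs Z])
  have "add Z (add (\<lambda>s. Z ((-1) * s)) X) = add (add Z (\<lambda>s. Z ((-1) * s))) X"
    by (rule real_vector_space_on_add_assoc[OF vs Z Z' X, symmetric])
  also have "add Z (\<lambda>s. Z ((-1) * s)) = (\<lambda>s. X (0 * s))"
    using real_vector_space_on_scale_add_left[OF vs Z, of 1 "-1"] oneps_zero[OF Z] oneps_zero[OF X] by simp
  also have "add (\<lambda>s. X (0 * s)) X = X"
    using real_vector_space_on_scale_add_left[OF vs X, of 0 1] by simp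
  finally show ?thesis .
qed

text \<open>Additivity makes X \<mapsto> D_X \<phi>(g) commute with the translations X \<mapsto> X + (X0 - Z) of L(G), which are
  continuous and act transitively, so continuity at one point spreads to every point.\<close>

lemma continuous_map_left_deriv_at:
  fixes add :: "(real \<Rightarrow> 'g::{group_add, t2_space}) \<Rightarrow> (real \<Rightarrow> 'g) \<Rightarrow> (real \<Rightarrow> 'g)"
    and T :: "(real \<Rightarrow> 'g) topology" and \<phi> :: "'g \<Rightarrow> 'y::{real_vector, t2_space}"
  assumes G: "topological_group TYPE('g)" and Y: "metrizable_lcs TYPE('y)" and \<phi>: "\<phi> \<in> LUC1_loc"
    and vs: "real_vector_space_on (oneps TYPE('g)) add (\<lambda>t X. \<lambda>s. X (t * s))"
    and conv: "\<And>X1 X2. X1 \<in> oneps TYPE('g) \<Longrightarrow> X2 \<in> oneps TYPE('g) \<Longrightarrow>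
      unif_compact_conv (\<lambda>n t. gpow (trotter X1 X2 t n) n) (add X1 X2)"
    and T_space: "topspace T = oneps TYPE('g)" and T_Baire: "Baire_space T"
    and T_finer: "\<forall>S. openin (compact_open (oneps TYPE('g))) S \<longrightarrow> openin T S"
    and T_add: "continuous_map (prod_topology T T) T (\<lambda>p. add (fst p) (snd p))"
  shows "continuous_map T euclidean (\<lambda>X. left_deriv \<phi> X g)"
proof (rule continuous_map_homogeneous_pointwise_limit[OF Y T_Baire])
  have "(\<lambda>s. 0) \<in> oneps TYPE('g)" by (simp add: oneps_def)
  then show "topspace T \<noteq> {}" using T_space by blast
  show "continuous_map T euclidean (\<lambda>X. real (Suc m) *\<^sub>R (\<phi> (g + X (1 / real (Suc m))) - \<phi> g))" for m
    using \<phi> by (intro continuous_map_difference_quotient[OF G Y] continuous_map_eval[OF T_space T_finer])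
      (simp add: LUC1_loc_def)
  show "(\<lambda>m. real (Suc m) *\<^sub>R (\<phi> (g + X (1 / real (Suc m))) - \<phi> g)) \<longlonglongrightarrow> left_deriv \<phi> X g"
    if "X \<in> topspace T" for X
    using that T_space by (intro LUC1_loc_difference_quotient_tendsto[OF \<phi>]) simp
  fix Z X0 assume "Z \<in> topspace T" "X0 \<in> topspace T"
  then have Z: "Z \<in> oneps TYPE('g)" and X0: "X0 \<in> oneps TYPE('g)" using T_space by auto
  define C where "C = add (\<lambda>s. Z ((-1) * s)) X0"
  have Z': "(\<lambda>s. Z ((-1) * s)) \<in> oneps TYPE('g)" by (rule real_vector_space_on_scale_closed[OF vs Z])
  have C: "C \<in> oneps TYPE('g)" unfolding C_def by (rule real_vector_space_on_add_closed[OF vs Z' X0])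
  have "continuous_map T (prod_topology T T) (\<lambda>X. (X, C))"
    using C T_space by (intro continuous_map_pairedI continuous_map_id[unfolded id_def]) simp_all
  from continuous_map_compose[OF this T_add] have "continuous_map T T (\<lambda>X. add X C)"
    by (simp add: o_def)
  moreover have "add Z C = X0" unfolding C_def by (rule oneps_add_neg_cancel_left[OF vs Z X0])
  moreover have "left_deriv \<phi> (add X C) g = left_deriv \<phi> X g - left_deriv \<phi> Z g + left_deriv \<phi> X0 g"
    if "X \<in> topspace T" for X
  proof -
    have X: "X \<in> oneps TYPE('g)" using that T_space by simp
    have "left_deriv \<phi> (add X C) g = left_deriv \<phi> X g + left_deriv \<phi> C g"
      by (rule left_deriv_add[OF G Y \<phi> vs conv X C])
    also have "left_deriv \<phi> C g = left_deriv \<phi> (\<lambda>s. Z ((-1) * s)) g + left_deriv \<phi> X0 g"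
      unfolding C_def by (rule left_deriv_add[OF G Y \<phi> vs conv Z' X0])
    also have "left_deriv \<phi> (\<lambda>s. Z ((-1) * s)) g = (-1) *\<^sub>R left_deriv \<phi> Z g"
      by (rule left_deriv_scale[OF Y \<phi> Z])
    finally show ?thesis by simp
  qed
  ultimately show "\<exists>\<tau>. continuous_map T T \<tau> \<and> \<tau> Z = X0 \<and>
      (\<forall>X\<in>topspace T. left_deriv \<phi> (\<tau> X) g = left_deriv \<phi> X g - left_deriv \<phi> Z g + left_deriv \<phi> X0 g)"
    by blast
qed

theorem corollary2p5:
  fixes add :: "(real \<Rightarrow> 'g::{group_add, t2_space}) \<Rightarrow> (real \<Rightarrow> 'g) \<Rightarrow> (real \<Rightarrow> 'g)"
    and T :: "(real \<Rightarrow> 'g) topology"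
    and \<phi> :: "'g \<Rightarrow> 'y::{real_vector, t2_space}"
  assumes G: "topological_group TYPE('g)"
    and vs: "real_vector_space_on (oneps TYPE('g)) add (\<lambda>t X. \<lambda>s. X (t * s))"
    and add_lim: "\<forall>X1\<in>oneps TYPE('g). \<forall>X2\<in>oneps TYPE('g).
                    unif_compact_conv (\<lambda>n t. gpow (X1 (t / real n) + X2 (t / real n)) n) (add X1 X2)"
    and T_space: "topspace T = oneps TYPE('g)"
    and T_Baire: "Baire_space T"
    and T_finer: "\<forall>S. openin (compact_open (oneps TYPE('g))) S \<longrightarrow> openin T S"
    and T_add: "continuous_map (prod_topology T T) T (\<lambda>p. add (fst p) (snd p))"
    and T_scale: "continuous_map (prod_topology euclideanreal T) T (\<lambda>p. \<lambda>s. snd p (fst p * s))"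
    and Y: "metrizable_lcs TYPE('y)"
    and \<phi>: "\<phi> \<in> LUC1_loc"
  shows "(\<forall>X1\<in>oneps TYPE('g). \<forall>X2\<in>oneps TYPE('g).
            left_deriv \<phi> (add X1 X2) = (\<lambda>g. left_deriv \<phi> X1 g + left_deriv \<phi> X2 g)) \<and>
         (\<forall>t. \<forall>X\<in>oneps TYPE('g). left_deriv \<phi> (\<lambda>s. X (t * s)) = (\<lambda>g. t *\<^sub>R left_deriv \<phi> X g)) \<and>
         continuous_map T LUC_pointwise (left_deriv \<phi>)"
proof -
  have conv: "\<And>X1 X2. X1 \<in> oneps TYPE('g) \<Longrightarrow> X2 \<in> oneps TYPE('g) \<Longrightarrow>
      unif_compact_conv (\<lambda>n t. gpow (trotter X1 X2 t n) n) (add X1 X2)"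
    using add_lim by (simp add: trotter_def)
  have "continuous_map T LUC_pointwise (left_deriv \<phi>)"
    unfolding LUC_pointwise_def continuous_map_in_subtopology continuous_map_componentwise_UNIV
    using \<phi> T_space continuous_map_left_deriv_at[OF G Y \<phi> vs conv T_space T_Baire T_finer T_add]
    by (auto intro: LUC1_loc_left_deriv_LUC_loc)
  then show ?thesis
    by (auto simp: left_deriv_add[OF G Y \<phi> vs conv] left_deriv_scale[OF Y \<phi>])
qed

end
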